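(* Let $s, n \ge 3$ and suppose there exist an $(n, d(F), \lambda(F))$-graph $F$ and an $(n, d(G), \lambda(G))$-graph $G$ on the same vertex set $V$ such that the pair $(F,G)$ is $H_s$-free. Let \[ \eta = \max\left\{ \frac{\lambda(G)^2}{d(G)^2}, \frac{\lambda(F)\lambda(G)}{d(F)d(G)} \right\}, \qquad w = \frac{4 n \log n}{d(G)}. \] Then there exists a $T_s$-free digraph $D$ on $d(F)\, n$ vertices such that for all $k \ge w$, \[ \mathrm{fwi}_k(D) \le 16^k \eta^{k-w} (d(F)\, n)^k. \]
   Context: Graphs may have loops (at most one per vertex); in the adjacency matrix a loop is a $1$ on the diagonal and contributes one to the degree. A graph is an $(n,d,\lambda)$-graph if it has $n$ vertices, is $d$-regular, and all eigenvalues of its adjacency matrix other than the largest one (which equals $d$) are at most $\lambda$ in absolute value. An ordered pair of graphs $(F,G)$ on the same vertex set is $H_s$-free if there is no $2s$-tuple of (not necessarily distinct) vertices $(a_1,b_1,\dots,a_s,b_s)$ with $a_ib_i \in E(F)$ for all $i\in[s]$ and $a_ib_j \in E(G)$ for all $1 \le i < j \le s$ (an edge $aa$ means a loop). $T_s$ is the transitive tournament on $s$ vertices; a digraph is $T_s$-free if it contains no copy of $T_s$. For a digraph $D$, a $k$-tuple $(v_1,\dots,v_k)\in V(D)^k$ is forward independent if there are no $i<j$ with $(v_i,v_j)$ an arc of $D$; $\mathrm{fwi}_k(D)$ is the number of such $k$-tuples. $\log$ is the natural logarithm. *)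

theory Defs
  imports Complex_Main "HOL-Library.Multiset" "HOL-Computational_Algebra.Polynomial"
    "Jordan_Normal_Form.Char_Poly"
begin

(* Graphs (loops allowed) on the vertex set {0..<n}, given by a symmetric
   edge relation E; E v v is a loop. *)
definition graph_on :: "nat \<Rightarrow> (nat \<Rightarrow> nat \<Rightarrow> bool) \<Rightarrow> bool" where
  "graph_on n E \<longleftrightarrow> (\<forall>u v. E u v \<longrightarrow> u < n \<and> v < n) \<and> (\<forall>u v. E u v \<longrightarrow> E v u)"

definition adj_mat :: "nat \<Rightarrow> (nat \<Rightarrow> nat \<Rightarrow> bool) \<Rightarrow> real mat" where
  "adj_mat n E = mat n n (\<lambda>(i,j). if E i j then 1 else 0)"

(* a loop contributes one to the degree *)
definition degree :: "nat \<Rightarrow> (nat \<Rightarrow> nat \<Rightarrow> bool) \<Rightarrow> nat \<Rightarrow> nat" where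
  "degree n E v = card {u. u < n \<and> E v u}"

definition adj_eigenvalues :: "nat \<Rightarrow> (nat \<Rightarrow> nat \<Rightarrow> bool) \<Rightarrow> complex multiset" where
  "adj_eigenvalues n E = proots (char_poly (map_mat complex_of_real (adj_mat n E)))"

(* (n,d,lambda)-graph: n vertices, d-regular, and all eigenvalues other than
   (one copy of) the largest one, d, are at most lambda in absolute value *)
definition ndl_graph :: "nat \<Rightarrow> nat \<Rightarrow> real \<Rightarrow> (nat \<Rightarrow> nat \<Rightarrow> bool) \<Rightarrow> bool" where
  "ndl_graph n d lam E \<longleftrightarrow> graph_on n E \<and> (\<forall>v<n. degree n E v = d) \<and>
     (\<forall>\<mu> \<in># adj_eigenvalues n E - {# complex_of_nat d #}. cmod \<mu> \<le> lam)"

definition Hs_free :: "nat \<Rightarrow> nat \<Rightarrow> (nat \<Rightarrow> nat \<Rightarrow> bool) \<Rightarrow> (nat \<Rightarrow> nat \<Rightarrow> bool) \<Rightarrow> bool" where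
  "Hs_free n s F G \<longleftrightarrow> \<not> (\<exists>a b :: nat \<Rightarrow> nat.
      (\<forall>i<s. a i < n \<and> b i < n) \<and> (\<forall>i<s. F (a i) (b i)) \<and>
      (\<forall>i j. i < j \<and> j < s \<longrightarrow> G (a i) (b j)))"

definition digraph_on :: "nat \<Rightarrow> (nat \<Rightarrow> nat \<Rightarrow> bool) \<Rightarrow> bool" where
  "digraph_on N A \<longleftrightarrow> (\<forall>u v. A u v \<longrightarrow> u < N \<and> v < N) \<and> (\<forall>v. \<not> A v v)"

definition Ts_free :: "nat \<Rightarrow> nat \<Rightarrow> (nat \<Rightarrow> nat \<Rightarrow> bool) \<Rightarrow> bool" where
  "Ts_free N s A \<longleftrightarrow> \<not> (\<exists>f :: nat \<Rightarrow> nat. inj_on f {0..<s} \<and> (\<forall>i<s. f i < N) \<and>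
      (\<forall>i j. i < j \<and> j < s \<longrightarrow> A (f i) (f j)))"

definition fwi :: "nat \<Rightarrow> (nat \<Rightarrow> nat \<Rightarrow> bool) \<Rightarrow> nat \<Rightarrow> nat" where
  "fwi N A k = card {xs :: nat list. length xs = k \<and> set xs \<subseteq> {0..<N} \<and>
      (\<forall>i j. i < j \<and> j < k \<longrightarrow> \<not> A (xs ! i) (xs ! j))}"

(* real power with the convention x^0 = 1 also for x = 0 *)
definition rpow :: "real \<Rightarrow> real \<Rightarrow> real" where
  "rpow x y = (if y = 0 then 1 else x powr y)"

end

(*
  Take as vertices of D the ordered edges (a,b) of F, with an arc (a,b) -> (a',b') whenever
  G a b'. A transitive tournament on s vertices of D is a copy of H_s in (F,G), and D has no loops
  because H_s-freeness makes F and G edge-disjoint.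

  A forward independent k-tuple of D is a sequence of F-edges (a_i,b_i) with no G a_i b_j for
  i < j. Built edge by edge, the candidate set X for the later b's loses the G-neighbourhood of each
  chosen a. By the expander mixing lemma for G and for F, at most c dF n of the F-edges (a,b) with
  b in X have a with at most dG/(2n) |X| neighbours in X, where
  c = 4 lG^2/dG^2 + 2 lF lG/(dF dG) <= 6 eta. Every other choice shrinks X by a factor
  1 - dG/(2n), which can happen at most 1 + 2 n ln n / dG <= w times, so all but w of the k steps
  have at most c dF n options.

  The mixing lemma is derived from the spectral hypothesis without the spectral theorem: the
  eigenvalues of A - (d/n) J are 0 and those of A other than d, so for rho > lambda the powers of
  (A - (d/n) J)/rho are bounded, and for a symmetric matrix C with bounded powers the inequality
  <Cv,Cv>^(2^m) <= <v,v>^(2^m - 1) <C^(2^m) v, C^(2^m) v> from Cauchy-Schwarz forces |Cv| <= |v|.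
*)
theory Submission
  imports Defs "Jordan_Normal_Form.Spectral_Radius" "HOL-Analysis.Convex"
begin

section \<open>Characteristic polynomial of a regular graph\<close>

definition shear_mat :: "nat \<Rightarrow> 'a::comm_ring_1 mat" where
  "shear_mat n = mat n n (\<lambda>(i,k). of_bool (k = 0) + of_bool (k \<noteq> 0 \<and> k = i))"

definition shear_inv_mat :: "nat \<Rightarrow> 'a::comm_ring_1 mat" where
  "shear_inv_mat n = mat n n (\<lambda>(i,k). of_bool (i = k) - of_bool (i \<noteq> 0 \<and> k = 0))"

lemma sum_shear_row:
  fixes f :: "nat \<Rightarrow> 'a::comm_ring_1"
  assumes "i < n"
  shows "(\<Sum>k = 0..<n. (of_bool (k = 0) + of_bool (k \<noteq> 0 \<and> k = i)) * f k) =
    f 0 + of_bool (i \<noteq> 0) * f i"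
proof -
  have "(\<Sum>k = 0..<n. (of_bool (k = 0) + of_bool (k \<noteq> 0 \<and> k = i)) * f k) =
     (\<Sum>k = 0..<n. (if k = 0 then f k else 0)) +
     (\<Sum>k = 0..<n. (if k = i then of_bool (i \<noteq> 0) * f k else 0))"
    by (subst sum.distrib[symmetric], rule sum.cong, auto)
  also have "\<dots> = f 0 + of_bool (i \<noteq> 0) * f i"
    using assms by (simp add: sum.delta')
  finally show ?thesis .
qed

lemma sum_shear_inv_row:
  fixes f :: "nat \<Rightarrow> 'a::comm_ring_1"
  assumes "i < n"
  shows "(\<Sum>k = 0..<n. (of_bool (i = k) - of_bool (i \<noteq> 0 \<and> k = 0)) * f k) =
    f i - of_bool (i \<noteq> 0) * f 0"
  using assms by (cases "i = 0")
    (auto simp: left_diff_distrib sum_subtractf of_bool_def if_distrib[of "\<lambda>x. x * _"] cong: if_cong)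

lemma shear_mat_inverse:
  assumes "0 < n"
  shows "shear_mat n * shear_inv_mat n = (1\<^sub>m n :: 'a::comm_ring_1 mat)"
    and "shear_inv_mat n * shear_mat n = (1\<^sub>m n :: 'a::comm_ring_1 mat)"
proof (rule eq_matI)
  fix i j assume ij: "i < dim_row (1\<^sub>m n :: 'a mat)" "j < dim_col (1\<^sub>m n :: 'a mat)"
  then have "(shear_mat n * shear_inv_mat n) $$ (i,j) = (\<Sum>k = 0..<n.
      (of_bool (k = 0) + of_bool (k \<noteq> 0 \<and> k = i)) * (of_bool (k = j) - of_bool (k \<noteq> 0 \<and> j = 0)) :: 'a)"
    by (simp add: shear_mat_def shear_inv_mat_def scalar_prod_def)
  also have "\<dots> = (1\<^sub>m n :: 'a mat) $$ (i,j)"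
    using ij assms by (subst sum_shear_row) auto
  finally show "(shear_mat n * shear_inv_mat n) $$ (i,j) = (1\<^sub>m n :: 'a mat) $$ (i,j)" .
next
  show "shear_inv_mat n * shear_mat n = (1\<^sub>m n :: 'a::comm_ring_1 mat)"
  proof (rule eq_matI)
    fix i j assume ij: "i < dim_row (1\<^sub>m n :: 'a mat)" "j < dim_col (1\<^sub>m n :: 'a mat)"
    then have "(shear_inv_mat n * shear_mat n) $$ (i,j) = (\<Sum>k = 0..<n.
        (of_bool (i = k) - of_bool (i \<noteq> 0 \<and> k = 0)) * (of_bool (j = 0) + of_bool (j \<noteq> 0 \<and> j = k)) :: 'a)"
      by (simp add: shear_mat_def shear_inv_mat_def scalar_prod_def)
    also have "\<dots> = (1\<^sub>m n :: 'a mat) $$ (i,j)"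
      using ij by (subst sum_shear_inv_row) auto
    finally show "(shear_inv_mat n * shear_mat n) $$ (i,j) = (1\<^sub>m n :: 'a mat) $$ (i,j)" .
  qed (auto simp: shear_mat_def shear_inv_mat_def)
qed (auto simp: shear_mat_def shear_inv_mat_def)

definition deflate_mat :: "'a::comm_ring_1 mat \<Rightarrow> nat \<Rightarrow> 'a mat" where
  "deflate_mat M n = mat (n - 1) (n - 1) (\<lambda>(i,j). M $$ (i + 1, j + 1) - M $$ (0, j + 1))"

definition deflate_block_mat :: "'a::comm_ring_1 mat \<Rightarrow> 'a \<Rightarrow> nat \<Rightarrow> 'a mat" where
  "deflate_block_mat M r n = four_block_mat (mat 1 1 (\<lambda>_. r)) (mat 1 (n - 1) (\<lambda>(_, j). M $$ (0, j + 1)))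
    (0\<^sub>m (n - 1) 1) (deflate_mat M n)"

lemma deflate_block_mat_carrier:
  assumes "0 < n"
  shows "deflate_block_mat M r n \<in> carrier_mat n n"
proof -
  have "deflate_block_mat M r n \<in> carrier_mat (1 + (n - 1)) (1 + (n - 1))"
    unfolding deflate_block_mat_def by (rule four_block_carrier_mat) (auto simp: deflate_mat_def)
  then show ?thesis using assms by simp
qed

lemma deflate_block_mat_entry:
  assumes "i < n" "j < n"
  shows "deflate_block_mat M r n $$ (i,j) = (if i = 0 then (if j = 0 then r else M $$ (0,j))
    else if j = 0 then 0 else M $$ (i,j) - M $$ (0,j))"
  using assms by (auto simp: deflate_block_mat_def deflate_mat_def)

text \<open>The first column of the shear matrix is the all-ones vector, an eigenvector of \<open>M\<close> for
  the eigenvalue \<open>r\<close>.\<close>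

lemma mult_shear_mat:
  fixes M :: "'a::comm_ring_1 mat"
  assumes M: "M \<in> carrier_mat n n" and n: "0 < n"
    and row_sums: "\<And>i. i < n \<Longrightarrow> (\<Sum>k = 0..<n. M $$ (i,k)) = r"
  shows "M * shear_mat n = shear_mat n * deflate_block_mat M r n"
proof (rule eq_matI)
  fix i j assume "i < dim_row (shear_mat n * deflate_block_mat M r n)"
    "j < dim_col (shear_mat n * deflate_block_mat M r n)"
  then have ij: "i < n" "j < n" using deflate_block_mat_carrier[OF n, of M r] by (auto simp: shear_mat_def)
  have "(shear_mat n * deflate_block_mat M r n) $$ (i,j) = (\<Sum>k = 0..<n.
      (of_bool (k = 0) + of_bool (k \<noteq> 0 \<and> k = i)) * deflate_block_mat M r n $$ (k,j))"
    using ij deflate_block_mat_carrier[OF n, of M r] by (simp add: shear_mat_def scalar_prod_def)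
  also have "\<dots> = deflate_block_mat M r n $$ (0,j) + of_bool (i \<noteq> 0) * deflate_block_mat M r n $$ (i,j)"
    by (rule sum_shear_row[OF ij(1)])
  finally have R: "(shear_mat n * deflate_block_mat M r n) $$ (i,j) =
      deflate_block_mat M r n $$ (0,j) + of_bool (i \<noteq> 0) * deflate_block_mat M r n $$ (i,j)" .
  have "(M * shear_mat n) $$ (i,j) =
      (\<Sum>k = 0..<n. M $$ (i,k) * (of_bool (j = 0) + of_bool (j \<noteq> 0 \<and> j = k)))"
    using ij M by (simp add: shear_mat_def scalar_prod_def)
  also have "\<dots> = (\<Sum>k = 0..<n. of_bool (j = 0) * M $$ (i,k)) +
      (\<Sum>k = 0..<n. (if k = j then of_bool (j \<noteq> 0) * M $$ (i,k) else 0))"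
    by (subst sum.distrib[symmetric], rule sum.cong, auto simp: algebra_simps)
  also have "\<dots> = of_bool (j = 0) * r + of_bool (j \<noteq> 0) * M $$ (i,j)"
    using ij by (simp add: sum_distrib_left[symmetric] row_sums sum.delta')
  finally show "(M * shear_mat n) $$ (i,j) = (shear_mat n * deflate_block_mat M r n) $$ (i,j)"
    unfolding R using ij n by (auto simp: deflate_block_mat_entry)
qed (use M deflate_block_mat_carrier[OF n, of M r] in \<open>auto simp: shear_mat_def\<close>)

lemma char_poly_const_row_sums:
  fixes M :: "'a::idom mat"
  assumes M: "M \<in> carrier_mat n n" and n: "0 < n"
    and row_sums: "\<And>i. i < n \<Longrightarrow> (\<Sum>k = 0..<n. M $$ (i,k)) = r"
  shows "char_poly M = [:-r, 1:] * char_poly (deflate_mat M n)"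
proof -
  have P: "shear_mat n \<in> carrier_mat n n" "shear_inv_mat n \<in> carrier_mat n n"
    by (auto simp: shear_mat_def shear_inv_mat_def)
  have "M = M * (shear_mat n * shear_inv_mat n)" using M by (simp add: shear_mat_inverse[OF n])
  also have "\<dots> = (M * shear_mat n) * shear_inv_mat n" using M P by (rule assoc_mult_mat[symmetric])
  also have "\<dots> = shear_mat n * deflate_block_mat M r n * shear_inv_mat n"
    using mult_shear_mat[OF M n row_sums] by simp
  finally have "similar_mat_wit M (deflate_block_mat M r n) (shear_mat n) (shear_inv_mat n)"
    unfolding similar_mat_wit_def Let_def
    using M deflate_block_mat_carrier[OF n, of M r] P shear_mat_inverse[OF n] by auto
  then have "char_poly M = char_poly (deflate_block_mat M r n)"
    by (intro char_poly_similar) (auto simp: similar_mat_def)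
  also have "\<dots> = char_poly (mat 1 1 (\<lambda>_. r)) * char_poly (deflate_mat M n)"
    unfolding deflate_block_mat_def by (rule char_poly_four_block_zeros_col) (auto simp: deflate_mat_def)
  also have "char_poly (mat 1 1 (\<lambda>_. r)) = [:-r, 1:]"
    by (simp add: char_poly_defs det_def sign_def)
  finally show ?thesis .
qed

definition kernel_mat :: "nat \<Rightarrow> (nat \<Rightarrow> nat \<Rightarrow> real) \<Rightarrow> complex mat" where
  "kernel_mat n c = mat n n (\<lambda>(i,j). complex_of_real (c i j))"

definition centred_adj :: "nat \<Rightarrow> (nat \<Rightarrow> nat \<Rightarrow> bool) \<Rightarrow> nat \<Rightarrow> nat \<Rightarrow> nat \<Rightarrow> real" where
  "centred_adj n E d i j = (if E i j then 1 else 0) - real d / real n"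

lemma sum_adj_row: "(\<Sum>k = 0..<n. (if E i k then 1 else 0 :: 'a::comm_ring_1)) = of_nat (degree n E i)"
proof -
  have "{0..<n} \<inter> {k. E i k} = {u. u < n \<and> E i u}" by auto
  then show ?thesis by (simp add: sum.If_cases degree_def)
qed

lemma char_poly_regular_adj:
  assumes regular: "\<And>v. v < n \<Longrightarrow> degree n E v = d" and n: "0 < n"
  defines "p \<equiv> char_poly (deflate_mat (map_mat complex_of_real (adj_mat n E)) n)"
  shows "char_poly (map_mat complex_of_real (adj_mat n E)) = [:- of_nat d, 1:] * p"
    and "char_poly (kernel_mat n (centred_adj n E d)) = [:0, 1:] * p"
proof -
  define A where "A = map_mat complex_of_real (adj_mat n E)"
  define B where "B = kernel_mat n (centred_adj n E d)"
  have A: "A \<in> carrier_mat n n" and B: "B \<in> carrier_mat n n"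
    by (simp_all add: A_def B_def adj_mat_def kernel_mat_def)
  have row_sums_A: "(\<Sum>k = 0..<n. A $$ (i,k)) = of_nat d" if "i < n" for i
  proof -
    have "(\<Sum>k = 0..<n. A $$ (i,k)) = (\<Sum>k = 0..<n. (if E i k then 1 else 0 :: complex))"
      using that by (intro sum.cong) (auto simp: A_def adj_mat_def)
    then show ?thesis using sum_adj_row regular[OF that] by metis
  qed
  have row_sums_B: "(\<Sum>k = 0..<n. B $$ (i,k)) = 0" if "i < n" for i
  proof -
    have "(\<Sum>k = 0..<n. B $$ (i,k)) = (\<Sum>k = 0..<n. (if E i k then 1 else 0 :: complex)) -
        (\<Sum>k = 0..<n. complex_of_real (real d / real n))"
      using that by (subst sum_subtractf[symmetric], intro sum.cong)
        (auto simp: B_def kernel_mat_def centred_adj_def)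
    then show ?thesis using sum_adj_row[of E i n, where 'a=complex] regular[OF that] n by simp
  qed
  have "deflate_mat B n = deflate_mat A n"
    by (rule eq_matI) (auto simp: deflate_mat_def A_def B_def adj_mat_def kernel_mat_def centred_adj_def)
  then show "char_poly A = [:- of_nat d, 1:] * p" "char_poly B = [:0, 1:] * p"
    using char_poly_const_row_sums[OF A n row_sums_A] char_poly_const_row_sums[OF B n row_sums_B]
    by (simp_all add: p_def A_def)
qed

lemma ndl_graph_spectrum:
  assumes ndl: "ndl_graph n d lam E" and n: "2 \<le> n"
  shows "0 \<le> lam"
    and "\<And>\<mu>. poly (char_poly (kernel_mat n (centred_adj n E d))) \<mu> = 0 \<Longrightarrow> cmod \<mu> \<le> lam"
proof -
  define A where "A = map_mat complex_of_real (adj_mat n E)"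
  define p where "p = char_poly (deflate_mat A n)"
  have regular: "\<And>v. v < n \<Longrightarrow> degree n E v = d"
    and ev: "\<And>\<mu>. \<mu> \<in># adj_eigenvalues n E - {# of_nat d #} \<Longrightarrow> cmod \<mu> \<le> lam"
    using ndl unfolding ndl_graph_def by auto
  have "0 < n" using n by simp
  note char_polys = char_poly_regular_adj[OF regular this]
  have char_poly_A: "char_poly A = [:- of_nat d, 1:] * p"
    using char_polys(1) by (simp add: A_def p_def)
  have D: "deflate_mat A n \<in> carrier_mat (n - 1) (n - 1)" by (simp add: deflate_mat_def)
  then have p: "p \<noteq> 0" using degree_monic_char_poly[OF D] unfolding p_def by auto
  have linear: "[:- of_nat d, 1:] \<noteq> (0 :: complex poly)" by simp
  have "adj_eigenvalues n E = {# of_nat d #} + proots p"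
    unfolding adj_eigenvalues_def A_def[symmetric] char_poly_A proots_mult[OF linear p]
    by (simp add: proots_linear_factor)
  then have root_p: "cmod \<mu> \<le> lam" if "poly p \<mu> = 0" for \<mu>
    using ev that \<open>p \<noteq> 0\<close> by simp
  obtain \<mu> where "\<mu> \<in> spectrum (deflate_mat A n)"
    using spectrum_non_empty[OF D] n by fastforce
  then have "poly p \<mu> = 0" using spectrum_root_char_poly[OF D] p_def by auto
  then show lam: "0 \<le> lam" using root_p norm_ge_zero order_trans by blast
  fix \<mu> assume "poly (char_poly (kernel_mat n (centred_adj n E d))) \<mu> = 0"
  then have "\<mu> = 0 \<or> poly p \<mu> = 0" using n char_polys(2) by (simp add: A_def p_def)
  then show "cmod \<mu> \<le> lam" using lam root_p by auto
qed

section \<open>Norm bounds from the spectrum\<close>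

definition kernel_apply :: "nat \<Rightarrow> (nat \<Rightarrow> nat \<Rightarrow> real) \<Rightarrow> (nat \<Rightarrow> real) \<Rightarrow> nat \<Rightarrow> real" where
  "kernel_apply n c v = (\<lambda>i. \<Sum>j<n. c i j * v j)"

definition dot :: "nat \<Rightarrow> (nat \<Rightarrow> real) \<Rightarrow> (nat \<Rightarrow> real) \<Rightarrow> real" where
  "dot n u w = (\<Sum>i<n. u i * w i)"

lemma dot_self_nonneg: "0 \<le> dot n u u"
  by (simp add: dot_def sum_nonneg)

lemma dot_square_le: "(dot n u w)\<^sup>2 \<le> dot n u u * dot n w w"
  using Cauchy_Schwarz_ineq_sum[of u w "{..<n}"] by (simp add: dot_def power2_eq_square)

lemma dot_self_le_of_abs_le:
  assumes "\<And>i. i < n \<Longrightarrow> \<bar>u i\<bar> \<le> K"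
  shows "dot n u u \<le> real n * K\<^sup>2"
proof -
  have "dot n u u \<le> (\<Sum>i<n. K\<^sup>2)"
    unfolding dot_def power2_eq_square[symmetric]
  proof (rule sum_mono)
    fix i assume "i \<in> {..<n}"
    then have "\<bar>u i\<bar> \<le> \<bar>K\<bar>" using assms[of i] by auto
    then show "(u i)\<^sup>2 \<le> K\<^sup>2" by (simp add: abs_le_square_iff)
  qed
  then show ?thesis by simp
qed

lemma kernel_apply_funpow_eq_pow_mat:
  "i < n \<Longrightarrow> complex_of_real ((kernel_apply n c ^^ k) v i) =
     (\<Sum>j<n. (kernel_mat n c ^\<^sub>m k) $$ (i,j) * complex_of_real (v j))"
proof (induction k arbitrary: v i)
  case 0
  then have "(\<Sum>j<n. (kernel_mat n c ^\<^sub>m 0) $$ (i,j) * complex_of_real (v j)) =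
      (\<Sum>j<n. (if i = j then complex_of_real (v j) else 0))"
    by (intro sum.cong) (auto simp: kernel_mat_def)
  then show ?case using 0 by simp
next
  case (Suc k)
  have C: "kernel_mat n c \<in> carrier_mat n n" by (simp add: kernel_mat_def)
  have "complex_of_real ((kernel_apply n c ^^ Suc k) v i) =
      (\<Sum>l<n. (kernel_mat n c ^\<^sub>m k) $$ (i,l) * complex_of_real (kernel_apply n c v l))"
    using Suc by (simp add: funpow_Suc_right del: funpow.simps)
  also have "\<dots> = (\<Sum>l<n. \<Sum>j<n. (kernel_mat n c ^\<^sub>m k) $$ (i,l) * (kernel_mat n c $$ (l,j) * complex_of_real (v j)))"
    by (intro sum.cong refl) (simp add: kernel_apply_def sum_distrib_left kernel_mat_def)
  also have "\<dots> = (\<Sum>j<n. \<Sum>l<n. (kernel_mat n c ^\<^sub>m k) $$ (i,l) * kernel_mat n c $$ (l,j) * complex_of_real (v j))"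
    by (subst sum.swap) (simp add: mult.assoc)
  also have "\<dots> = (\<Sum>j<n. (kernel_mat n c ^\<^sub>m Suc k) $$ (i,j) * complex_of_real (v j))"
    using Suc.prems C by (intro sum.cong refl) (simp add: scalar_prod_def sum_distrib_right atLeast0LessThan)
  finally show ?case .
qed

lemma dot_kernel_apply_commute:
  assumes "\<And>i j. i < n \<Longrightarrow> j < n \<Longrightarrow> c i j = c j i"
  shows "dot n (kernel_apply n c u) w = dot n u (kernel_apply n c w)"
proof -
  have "dot n (kernel_apply n c u) w = (\<Sum>i<n. \<Sum>j<n. c i j * u j * w i)"
    by (simp add: dot_def kernel_apply_def sum_distrib_right)
  also have "\<dots> = (\<Sum>j<n. \<Sum>i<n. c i j * u j * w i)" by (rule sum.swap)
  also have "\<dots> = (\<Sum>j<n. \<Sum>i<n. u j * (c j i * w i))"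
    using assms by (intro sum.cong refl) (auto simp: algebra_simps)
  also have "\<dots> = dot n u (kernel_apply n c w)"
    by (simp add: dot_def kernel_apply_def sum_distrib_left)
  finally show ?thesis .
qed

lemma dot_funpow_kernel_apply_commute:
  assumes "\<And>i j. i < n \<Longrightarrow> j < n \<Longrightarrow> c i j = c j i"
  shows "dot n ((kernel_apply n c ^^ k) u) w = dot n u ((kernel_apply n c ^^ k) w)"
proof (induction k arbitrary: u)
  case (Suc k)
  then show ?case
    by (simp add: funpow_Suc_right dot_kernel_apply_commute[OF assms] funpow_swap1
        del: funpow.simps)
qed simp

text \<open>Iterating \<open>\<langle>C\<^sup>M v, C\<^sup>M v\<rangle> = \<langle>v, C\<^sup>2\<^sup>M v\<rangle>\<close> and Cauchy-Schwarz.\<close>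

lemma dot_kernel_apply_pow2_le:
  assumes sym: "\<And>i j. i < n \<Longrightarrow> j < n \<Longrightarrow> c i j = c j i"
  defines "C \<equiv> kernel_apply n c"
  shows "dot n (C v) (C v) ^ (2 ^ m) \<le> dot n v v ^ (2 ^ m - 1) * dot n ((C ^^ 2 ^ m) v) ((C ^^ 2 ^ m) v)"
proof (induction m)
  case (Suc m)
  define M :: nat where "M = 2 ^ m"
  let ?Q = "\<lambda>x. dot n x x"
  have "1 \<le> M" by (simp add: M_def)
  then have exponents: "2 * (M - 1) + 1 = 2 ^ Suc m - 1" "M + M = 2 ^ Suc m"
    by (simp_all add: M_def[symmetric])
  have square: "(?Q ((C ^^ M) v))\<^sup>2 \<le> ?Q v * ?Q ((C ^^ (M + M)) v)"
  proof -
    have "?Q ((C ^^ M) v) = dot n v ((C ^^ (M + M)) v)"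
      unfolding C_def by (simp add: dot_funpow_kernel_apply_commute[OF sym] funpow_add)
    then show ?thesis using dot_square_le[of n v "(C ^^ (M + M)) v"] by simp
  qed
  have "?Q (C v) ^ 2 ^ Suc m = (?Q (C v) ^ M)\<^sup>2"
    by (simp add: M_def power_mult[symmetric] mult.commute)
  also have "\<dots> \<le> (?Q v ^ (M - 1) * ?Q ((C ^^ M) v))\<^sup>2"
    using Suc.IH by (intro power_mono) (auto simp: M_def dot_self_nonneg)
  also have "\<dots> = ?Q v ^ (2 * (M - 1)) * (?Q ((C ^^ M) v))\<^sup>2"
    by (simp add: power_mult_distrib power_mult[symmetric] mult.commute)
  also have "\<dots> \<le> ?Q v ^ (2 * (M - 1)) * (?Q v * ?Q ((C ^^ (M + M)) v))"
    using square by (intro mult_left_mono) (auto simp: dot_self_nonneg)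
  also have "\<dots> = ?Q v ^ (2 ^ Suc m - 1) * ?Q ((C ^^ 2 ^ Suc m) v)"
    unfolding exponents(1)[symmetric] unfolding exponents(2)[symmetric]
    by (simp only: power_add power_one_right mult.assoc)
  finally show ?case .
qed simp

text \<open>By the previous estimate, a violation would keep \<open>(\<langle>Cv, Cv\<rangle> / \<langle>v, v\<rangle>) ^ 2 ^ m\<close> bounded in \<open>m\<close>.\<close>

lemma dot_kernel_apply_le_of_bounded_orbit:
  assumes sym: "\<And>i j. i < n \<Longrightarrow> j < n \<Longrightarrow> c i j = c j i"
    and bounded: "\<And>k i. i < n \<Longrightarrow> \<bar>(kernel_apply n c ^^ k) v i\<bar> \<le> K"
  shows "dot n (kernel_apply n c v) (kernel_apply n c v) \<le> dot n v v"
proof (rule ccontr)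
  define C where "C = kernel_apply n c"
  define q where "q = dot n v v"
  define q1 where "q1 = dot n (C v) (C v)"
  assume "\<not> ?thesis"
  then have q_q1: "q < q1" by (simp add: q_def q1_def C_def)
  have q: "0 \<le> q" by (simp add: q_def dot_self_nonneg)
  have orbit: "dot n ((C ^^ k) v) ((C ^^ k) v) \<le> real n * K\<^sup>2" for k
    using bounded by (intro dot_self_le_of_abs_le) (simp add: C_def)
  have pow2: "q1 ^ 2 ^ m \<le> q ^ (2 ^ m - 1) * (real n * K\<^sup>2)" for m
  proof -
    have "q1 ^ 2 ^ m \<le> q ^ (2 ^ m - 1) * dot n ((C ^^ 2 ^ m) v) ((C ^^ 2 ^ m) v)"
      unfolding q_def q1_def C_def by (rule dot_kernel_apply_pow2_le[OF sym])
    also have "\<dots> \<le> q ^ (2 ^ m - 1) * (real n * K\<^sup>2)"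
      using orbit q by (intro mult_left_mono) auto
    finally show ?thesis .
  qed
  show False
  proof (cases "q = 0")
    case True
    then show False using pow2[of 1] q_q1 by (simp add: power2_eq_square mult_le_0_iff)
  next
    case False
    then have "0 < q" using q by simp
    define x where "x = q1 / q"
    have "1 < x" using q_q1 \<open>0 < q\<close> by (simp add: x_def)
    then obtain m where m: "real n * K\<^sup>2 / q < x ^ m" using real_arch_pow by blast
    have "x ^ m \<le> x ^ 2 ^ m" using \<open>1 < x\<close> less_exp[of m] by (intro power_increasing) auto
    also have "x ^ 2 ^ m = q1 ^ 2 ^ m / (q ^ (2 ^ m - 1) * q)"
      using power_minus_mult[of "2 ^ m" q] by (simp add: x_def power_divide)
    also have "\<dots> \<le> (q ^ (2 ^ m - 1) * (real n * K\<^sup>2)) / (q ^ (2 ^ m - 1) * q)"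
      using pow2[of m] \<open>0 < q\<close> by (intro divide_right_mono) auto
    also have "\<dots> = real n * K\<^sup>2 / q" using \<open>0 < q\<close> by simp
    finally show False using m by simp
  qed
qed

lemma bounded_orbit_of_spectral_radius_lt_1:
  assumes "spectral_radius (kernel_mat n c) < 1"
  obtains K where "\<And>k i. i < n \<Longrightarrow> \<bar>(kernel_apply n c ^^ k) v i\<bar> \<le> K"
proof -
  have C: "kernel_mat n c \<in> carrier_mat n n" by (simp add: kernel_mat_def)
  obtain b where b: "\<And>k. norm_bound (kernel_mat n c ^\<^sub>m k) b"
    using spectral_radius_jnf_norm_bound_less_1_upper_triangular[OF C assms] by blast
  have "\<bar>(kernel_apply n c ^^ k) v i\<bar> \<le> (\<Sum>j<n. b * \<bar>v j\<bar>)" if i: "i < n" for k i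
  proof -
    have "\<bar>(kernel_apply n c ^^ k) v i\<bar> =
        cmod (\<Sum>j<n. (kernel_mat n c ^\<^sub>m k) $$ (i,j) * complex_of_real (v j))"
      using kernel_apply_funpow_eq_pow_mat[OF i] by (metis norm_of_real)
    also have "\<dots> \<le> (\<Sum>j<n. cmod ((kernel_mat n c ^\<^sub>m k) $$ (i,j) * complex_of_real (v j)))"
      by (rule norm_sum)
    also have "\<dots> \<le> (\<Sum>j<n. b * \<bar>v j\<bar>)"
    proof (rule sum_mono)
      fix j assume "j \<in> {..<n}"
      then have "cmod ((kernel_mat n c ^\<^sub>m k) $$ (i,j)) \<le> b"
        using b[of k] i C unfolding norm_bound_def by auto
      then show "cmod ((kernel_mat n c ^\<^sub>m k) $$ (i,j) * complex_of_real (v j)) \<le> b * \<bar>v j\<bar>"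
        by (simp add: norm_mult mult_right_mono)
    qed
    finally show ?thesis .
  qed
  then show thesis by (rule that)
qed

lemma spectral_radius_scaled_lt_1:
  assumes roots: "\<And>\<mu>. poly (char_poly (kernel_mat n c)) \<mu> = 0 \<Longrightarrow> cmod \<mu> \<le> lam"
    and "0 \<le> lam" "lam < \<rho>" "0 < n"
  shows "spectral_radius (kernel_mat n (\<lambda>i j. c i j / \<rho>)) < 1"
proof -
  have "0 < \<rho>" using assms(2,3) by simp
  have C: "kernel_mat n c \<in> carrier_mat n n" and C': "kernel_mat n (\<lambda>i j. c i j / \<rho>) \<in> carrier_mat n n"
    by (simp_all add: kernel_mat_def)
  have C'_smult: "kernel_mat n (\<lambda>i j. c i j / \<rho>) = complex_of_real (1 / \<rho>) \<cdot>\<^sub>m kernel_mat n c"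
    by (rule eq_matI) (auto simp: kernel_mat_def)
  obtain \<mu> where \<mu>: "\<mu> \<in> spectrum (kernel_mat n (\<lambda>i j. c i j / \<rho>))"
    and radius: "spectral_radius (kernel_mat n (\<lambda>i j. c i j / \<rho>)) = cmod \<mu>"
    using spectral_radius_mem_max(1)[OF C' \<open>0 < n\<close>] by auto
  have "char_poly (kernel_mat n (\<lambda>i j. c i j / \<rho>)) \<noteq> 0"
    using degree_monic_char_poly[OF C'] by auto
  then have "order \<mu> (char_poly (kernel_mat n (\<lambda>i j. c i j / \<rho>))) \<noteq> 0"
    using \<mu> spectrum_root_char_poly[OF C'] order_root by blast
  then have "order (\<mu> * complex_of_real \<rho>) (char_poly (kernel_mat n c)) \<noteq> 0"
    using \<open>0 < \<rho>\<close> by (simp add: C'_smult order_char_poly_smult[OF C])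
  then have "cmod (\<mu> * complex_of_real \<rho>) \<le> lam"
    using roots order_root by blast
  then have "cmod \<mu> * \<rho> \<le> lam" using \<open>0 < \<rho>\<close> by (simp add: norm_mult)
  then have "cmod \<mu> * \<rho> < 1 * \<rho>" using assms(3) by linarith
  then show ?thesis unfolding radius using mult_less_cancel_right_pos[OF \<open>0 < \<rho>\<close>] by blast
qed

text \<open>Scale by \<open>\<rho> > \<lambda>\<close> to get bounded powers, then let \<open>\<rho>\<close> tend to \<open>\<lambda>\<close>.\<close>

lemma dot_kernel_apply_le_of_roots:
  assumes sym: "\<And>i j. i < n \<Longrightarrow> j < n \<Longrightarrow> c i j = c j i" and lam: "0 \<le> lam"
    and roots: "\<And>\<mu>. poly (char_poly (kernel_mat n c)) \<mu> = 0 \<Longrightarrow> cmod \<mu> \<le> lam"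
  shows "dot n (kernel_apply n c v) (kernel_apply n c v) \<le> lam\<^sup>2 * dot n v v"
proof (cases "n = 0")
  case False
  have scaled: "dot n (kernel_apply n c v) (kernel_apply n c v) \<le> \<rho>\<^sup>2 * dot n v v" if "lam < \<rho>" for \<rho>
  proof -
    have "0 < \<rho>" using that lam by simp
    define c' where "c' = (\<lambda>i j. c i j / \<rho>)"
    have "spectral_radius (kernel_mat n c') < 1"
      unfolding c'_def using roots lam that False by (intro spectral_radius_scaled_lt_1) auto
    then obtain K where "\<And>k i. i < n \<Longrightarrow> \<bar>(kernel_apply n c' ^^ k) v i\<bar> \<le> K"
      by (rule bounded_orbit_of_spectral_radius_lt_1[where v = v]) blast
    moreover have "c' i j = c' j i" if "i < n" "j < n" for i j
      using sym[OF that] by (simp add: c'_def)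
    ultimately have "dot n (kernel_apply n c' v) (kernel_apply n c' v) \<le> dot n v v"
      by (intro dot_kernel_apply_le_of_bounded_orbit)
    moreover have "kernel_apply n c' v = (\<lambda>i. kernel_apply n c v i / \<rho>)"
      by (simp add: kernel_apply_def c'_def sum_divide_distrib)
    then have "dot n (kernel_apply n c' v) (kernel_apply n c' v) =
        dot n (kernel_apply n c v) (kernel_apply n c v) / \<rho>\<^sup>2"
      by (simp add: dot_def sum_divide_distrib power2_eq_square)
    ultimately show ?thesis using \<open>0 < \<rho>\<close> by (simp add: field_simps)
  qed
  have "((\<lambda>\<rho>. \<rho>\<^sup>2 * dot n v v) \<longlongrightarrow> lam\<^sup>2 * dot n v v) (at_right lam)"
    by (intro tendsto_mult_right tendsto_power tendsto_ident_at)
  moreover have "\<forall>\<^sub>F \<rho> in at_right lam. dot n (kernel_apply n c v) (kernel_apply n c v) \<le> \<rho>\<^sup>2 * dot n v v"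
    using eventually_at_right_less by (rule eventually_mono) (rule scaled)
  ultimately show ?thesis by (rule tendsto_lowerbound) simp
qed (simp add: dot_def)

lemma dot_centred_adj_le:
  assumes "ndl_graph n d lam E" and "2 \<le> n"
  shows "dot n (kernel_apply n (centred_adj n E d) v) (kernel_apply n (centred_adj n E d) v)
    \<le> lam\<^sup>2 * dot n v v"
proof (rule dot_kernel_apply_le_of_roots)
  have "E i j = E j i" for i j using assms(1) unfolding ndl_graph_def graph_on_def by blast
  then show "centred_adj n E d i j = centred_adj n E d j i" for i j by (simp add: centred_adj_def)
qed (use ndl_graph_spectrum[OF assms] in auto)

section \<open>Expander mixing lemma\<close>

lemma sum_lessThan_mult_of_bool:
  fixes f :: "nat \<Rightarrow> real"
  assumes "S \<subseteq> {..<n}"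
  shows "(\<Sum>i<n. f i * of_bool (i \<in> S)) = sum f S"
  using assms by (simp add: sum.If_cases Int_absorb1)

lemma expander_mixing:
  assumes ndl: "ndl_graph n d lam E" and n: "2 \<le> n"
    and S: "S \<subseteq> {..<n}" and T: "T \<subseteq> {..<n}"
  shows "\<bar>real (\<Sum>i\<in>S. card {j\<in>T. E i j}) - real d * card S * card T / n\<bar>
    \<le> lam * sqrt (card S * card T)"
proof -
  define u :: "nat \<Rightarrow> real" where "u i = of_bool (i \<in> S)" for i
  define v :: "nat \<Rightarrow> real" where "v i = of_bool (i \<in> T)" for i
  define Bv where "Bv = kernel_apply n (centred_adj n E d) v"
  have "finite T" using T finite_subset by blast
  have dot_u: "dot n u w = sum w S" for w
    using sum_lessThan_mult_of_bool[OF S, of w] by (simp add: dot_def u_def mult.commute)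
  have dot_v: "dot n v v = card T"
    using sum_lessThan_mult_of_bool[OF T, of v] by (simp add: dot_def v_def)
  have Bv: "Bv i = real (card {j\<in>T. E i j}) - real d * card T / n" for i
  proof -
    have "Bv i = (\<Sum>j\<in>T. centred_adj n E d i j)"
      using sum_lessThan_mult_of_bool[OF T] by (simp add: Bv_def kernel_apply_def v_def)
    also have "\<dots> = (\<Sum>j\<in>T. (if E i j then 1 else 0)) - (\<Sum>j\<in>T. real d / real n)"
      by (simp add: centred_adj_def sum_subtractf)
    finally show ?thesis using \<open>finite T\<close> by (simp add: sum.If_cases Int_def conj_commute)
  qed
  have "(dot n u Bv)\<^sup>2 \<le> dot n u u * dot n Bv Bv" by (rule dot_square_le)
  also have "\<dots> \<le> dot n u u * (lam\<^sup>2 * dot n v v)"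
    unfolding Bv_def using dot_centred_adj_le[OF ndl n] by (intro mult_left_mono) (auto simp: dot_self_nonneg)
  also have "\<dots> = (lam * sqrt (card S * card T))\<^sup>2"
    by (simp add: dot_u dot_v u_def power_mult_distrib)
  finally have "\<bar>dot n u Bv\<bar> \<le> \<bar>lam * sqrt (card S * card T)\<bar>" by (simp add: abs_le_square_iff)
  moreover have "dot n u Bv = real (\<Sum>i\<in>S. card {j\<in>T. E i j}) - real d * card S * card T / n"
    by (simp add: dot_u Bv sum_subtractf)
  ultimately show ?thesis using ndl_graph_spectrum(1)[OF ndl n] by simp
qed

lemma ndl_graph_lambda_ge_of_non_edge:
  assumes "ndl_graph n d lam E" and "2 \<le> n" and "a < n" "b < n" "\<not> E a b"
  shows "real d / real n \<le> lam"
proof -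
  have empty: "{j. j = b \<and> E a j} = {}" using assms(5) by auto
  show ?thesis using expander_mixing[OF assms(1,2), of "{a}" "{b}"] assms(3,4) by (simp add: empty)
qed

lemma ndl_graph_lambda_pos_of_disjoint:
  assumes F: "ndl_graph n dF lF F" and G: "ndl_graph n dG lG G" and "2 \<le> n" "1 \<le> dF" "1 \<le> dG"
    and disjoint: "\<And>a b. F a b \<Longrightarrow> \<not> G a b"
  shows "0 < lG"
proof -
  have "0 < n" using \<open>2 \<le> n\<close> by simp
  then have "card {b. b < n \<and> F 0 b} \<noteq> 0"
    using F \<open>1 \<le> dF\<close> unfolding ndl_graph_def by (simp add: degree_def)
  then have "{b. b < n \<and> F 0 b} \<noteq> {}" by (metis card.empty)
  then obtain b where "b < n" "F 0 b" by blast
  then have "real dG / real n \<le> lG"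
    using ndl_graph_lambda_ge_of_non_edge[OF G \<open>2 \<le> n\<close> \<open>0 < n\<close>] disjoint by blast
  moreover have "0 < real dG / real n" using \<open>1 \<le> dG\<close> \<open>0 < n\<close> by simp
  ultimately show ?thesis by linarith
qed

section \<open>Counting forward-avoiding sequences\<close>

fun forward_avoiding :: "(nat \<Rightarrow> nat \<Rightarrow> bool) \<Rightarrow> nat set \<Rightarrow> (nat \<times> nat) list \<Rightarrow> bool" where
  "forward_avoiding G X [] = True"
| "forward_avoiding G X (e # ps) =
    (snd e \<in> X \<and> forward_avoiding G {b \<in> X. \<not> G (fst e) b} ps)"

definition avoiding_seqs ::
    "(nat \<times> nat) set \<Rightarrow> (nat \<Rightarrow> nat \<Rightarrow> bool) \<Rightarrow> nat \<Rightarrow> nat set \<Rightarrow> (nat \<times> nat) list set" where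
  "avoiding_seqs P G r X = {ps. length ps = r \<and> set ps \<subseteq> P \<and> forward_avoiding G X ps}"

lemma forward_avoidingI:
  assumes "\<And>j. j < length ps \<Longrightarrow> snd (ps ! j) \<in> X"
    and "\<And>i j. i < j \<Longrightarrow> j < length ps \<Longrightarrow> \<not> G (fst (ps ! i)) (snd (ps ! j))"
  shows "forward_avoiding G X ps"
  using assms
proof (induction ps arbitrary: X)
  case (Cons e ps)
  have "forward_avoiding G {b \<in> X. \<not> G (fst e) b} ps"
  proof (rule Cons.IH)
    show "snd (ps ! j) \<in> {b \<in> X. \<not> G (fst e) b}" if "j < length ps" for j
      using Cons.prems(1)[of "Suc j"] Cons.prems(2)[of 0 "Suc j"] that by simp
    show "\<not> G (fst (ps ! i)) (snd (ps ! j))" if "i < j" "j < length ps" for i j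
      using Cons.prems(2)[of "Suc i" "Suc j"] that by simp
  qed
  then show ?case using Cons.prems(1)[of 0] by simp
qed simp

lemma finite_avoiding_seqs: "finite P \<Longrightarrow> finite (avoiding_seqs P G r X)"
  by (rule finite_subset[OF _ finite_lists_length_eq[of P r]]) (auto simp: avoiding_seqs_def)

lemma avoiding_seqs_0: "avoiding_seqs P G 0 X = {[]}"
  by (auto simp: avoiding_seqs_def)

lemma card_avoiding_seqs_Suc_le:
  assumes "finite P"
  shows "card (avoiding_seqs P G (Suc r) X) \<le>
    (\<Sum>e\<in>{e\<in>P. snd e \<in> X}. card (avoiding_seqs P G r {b \<in> X. \<not> G (fst e) b}))"
proof -
  have "avoiding_seqs P G (Suc r) X \<subseteq>
      (\<Union>e\<in>{e\<in>P. snd e \<in> X}. (#) e ` avoiding_seqs P G r {b \<in> X. \<not> G (fst e) b})"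
  proof
    fix ps assume "ps \<in> avoiding_seqs P G (Suc r) X"
    then obtain e qs where "ps = e # qs" "e \<in> P" "snd e \<in> X"
      "qs \<in> avoiding_seqs P G r {b \<in> X. \<not> G (fst e) b}"
      unfolding avoiding_seqs_def by (cases ps) auto
    then show "ps \<in> (\<Union>e\<in>{e\<in>P. snd e \<in> X}. (#) e ` avoiding_seqs P G r {b \<in> X. \<not> G (fst e) b})"
      by blast
  qed
  then have "card (avoiding_seqs P G (Suc r) X) \<le>
      card (\<Union>e\<in>{e\<in>P. snd e \<in> X}. (#) e ` avoiding_seqs P G r {b \<in> X. \<not> G (fst e) b})"
    using assms by (intro card_mono) (auto intro: finite_avoiding_seqs)
  also have "\<dots> \<le> (\<Sum>e\<in>{e\<in>P. snd e \<in> X}. card ((#) e ` avoiding_seqs P G r {b \<in> X. \<not> G (fst e) b}))"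
    using assms by (intro card_UN_le) simp
  also have "\<dots> \<le> (\<Sum>e\<in>{e\<in>P. snd e \<in> X}. card (avoiding_seqs P G r {b \<in> X. \<not> G (fst e) b}))"
    by (intro sum_mono card_image_le finite_avoiding_seqs assms)
  finally show ?thesis .
qed

text \<open>An upper bound on the number of times a set of size \<open>x\<close> can shrink by a factor \<open>1 - \<delta>\<close>
  before it becomes empty.\<close>

definition shrink_potential :: "real \<Rightarrow> nat \<Rightarrow> real" where
  "shrink_potential \<delta> x = (if x = 0 then 0 else 1 + ln (real x) / \<delta>)"

lemma shrink_potential_nonneg: "0 < \<delta> \<Longrightarrow> 0 \<le> shrink_potential \<delta> x"
  by (auto simp: shrink_potential_def)

lemma shrink_potential_mono: "0 < \<delta> \<Longrightarrow> y \<le> x \<Longrightarrow> shrink_potential \<delta> y \<le> shrink_potential \<delta> x"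
  by (auto simp: shrink_potential_def divide_right_mono)

lemma shrink_potential_shrink:
  assumes \<delta>: "0 < \<delta>" "\<delta> < 1" and x: "x \<noteq> 0" and y: "real y \<le> (1 - \<delta>) * real x"
  shows "shrink_potential \<delta> y \<le> shrink_potential \<delta> x - 1"
proof (cases "y = 0")
  case False
  have "ln (real y) \<le> ln ((1 - \<delta>) * real x)" using False y by (intro ln_mono) auto
  also have "\<dots> = ln (1 - \<delta>) + ln (real x)" using \<delta> x by (simp add: ln_mult)
  also have "ln (1 - \<delta>) \<le> - \<delta>" using ln_le_minus_one[of "1 - \<delta>"] \<delta> by simp
  finally have "ln (real y) / \<delta> \<le> (ln (real x) - \<delta>) / \<delta>" using \<delta> by (intro divide_right_mono) auto
  also have "\<dots> = ln (real x) / \<delta> - 1" using \<delta> by (simp add: field_simps)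
  finally show ?thesis using False x by (simp add: shrink_potential_def)
qed (use \<delta> x in \<open>auto simp: shrink_potential_def\<close>)

lemma shrink_potential_le:
  assumes "3 \<le> n" "1 \<le> d" "d \<le> n"
  shows "shrink_potential (real d / (2 * real n)) n \<le> 4 * real n * ln (real n) / real d"
proof -
  have "exp 1 \<le> real n" using exp_le assms(1) by linarith
  then have "1 \<le> ln (real n)" using assms(1) by (subst ln_ge_iff) auto
  then have "real n * 1 \<le> real n * (2 * ln (real n))" by (intro mult_left_mono) auto
  then have "real d \<le> 2 * real n * ln (real n)" using assms(3) by linarith
  then show ?thesis using assms by (simp add: shrink_potential_def field_simps)
qed

lemma powr_shrink_potential_mono:
  assumes "0 < \<delta>" "0 < c" "c \<le> 1" "y \<le> x"
  shows "c powr (t - shrink_potential \<delta> y) \<le> c powr (t - shrink_potential \<delta> x)"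
  using assms shrink_potential_mono[of \<delta> y x] by (intro powr_mono') auto

lemma powr_shrink_potential_shrink:
  assumes "0 < \<delta>" "\<delta> < 1" "0 < c" "c \<le> 1" "x \<noteq> 0" "real y \<le> (1 - \<delta>) * real x"
  shows "c powr (t - shrink_potential \<delta> y) \<le> c powr (t + 1 - shrink_potential \<delta> x)"
  using assms shrink_potential_shrink[of \<delta> x y] by (intro powr_mono') auto

lemma card_non_neighbours_le:
  fixes \<delta> :: real
  assumes "finite X" "\<not> real (card {b\<in>X. G a b}) \<le> \<delta> * card X"
  shows "real (card {b\<in>X. \<not> G a b}) \<le> (1 - \<delta>) * card X"
proof -
  have "card {b\<in>X. \<not> G a b} + card {b\<in>X. G a b} = card X"
    using assms(1) by (subst card_Un_disjoint[symmetric]) (auto intro: arg_cong[where f = card])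
  then show ?thesis using assms(2) by (simp add: algebra_simps flip: of_nat_add)
qed

lemma sum_le_by_cases:
  fixes f :: "'a \<Rightarrow> real"
  assumes "finite A" and "\<And>e. e \<in> A \<Longrightarrow> Q e \<Longrightarrow> f e \<le> a" and "\<And>e. e \<in> A \<Longrightarrow> \<not> Q e \<Longrightarrow> f e \<le> b"
    and "real (card {e\<in>A. Q e}) \<le> M" "real (card {e\<in>A. \<not> Q e}) \<le> M'" and "0 \<le> a" "0 \<le> b"
  shows "sum f A \<le> M * a + M' * b"
proof -
  have "A = {e\<in>A. Q e} \<union> {e\<in>A. \<not> Q e}" by auto
  then have "sum f A = sum f {e\<in>A. Q e} + sum f {e\<in>A. \<not> Q e}"
    using \<open>finite A\<close> by (metis (no_types, lifting) sum.union_disjoint finite_Un disjoint_iff mem_Collect_eq)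
  also have "\<dots> \<le> (\<Sum>e\<in>{e\<in>A. Q e}. a) + (\<Sum>e\<in>{e\<in>A. \<not> Q e}. b)"
    using assms(2,3) by (intro add_mono sum_mono) auto
  also have "\<dots> \<le> M * a + M' * b"
    using assms(4-7) by (simp add: add_mono mult_right_mono)
  finally show ?thesis .
qed

text \<open>Choosing the next pair \<open>e\<close> either shrinks the candidate set by a factor \<open>1 - \<delta>\<close>, which
  lowers its shrink potential by 1, or uses one of the at most \<open>c N\<close> sparse pairs.\<close>

lemma card_avoiding_seqs_Suc_bound:
  fixes \<delta> c N R :: real
  assumes P: "finite P" "real (card P) \<le> N" and \<delta>: "0 < \<delta>" "\<delta> < 1" and c: "0 < c" "c \<le> 1"
    and sparse: "real (card {e\<in>P. snd e \<in> X \<and> real (card {b\<in>X. G (fst e) b}) \<le> \<delta> * card X}) \<le> c * N"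
    and X: "finite X" "X \<noteq> {}" and "0 \<le> R"
    and IH: "\<And>Y. Y \<subseteq> X \<Longrightarrow>
      real (card (avoiding_seqs P G r Y)) \<le> R * c powr (real r - shrink_potential \<delta> (card Y))"
  shows "real (card (avoiding_seqs P G (Suc r) X)) \<le>
    2 * N * R * c powr (real (Suc r) - shrink_potential \<delta> (card X))"
proof -
  define L where "L = shrink_potential \<delta> (card X)"
  define Y where "Y e = {b \<in> X. \<not> G (fst e) b}" for e :: "nat \<times> nat"
  define sparse_at where "sparse_at e \<longleftrightarrow> real (card {b\<in>X. G (fst e) b}) \<le> \<delta> * card X"
    for e :: "nat \<times> nat"
  have sparse_step: "real (card (avoiding_seqs P G r (Y e))) \<le> R * c powr (real r - L)" for e
  proof -
    have "card (Y e) \<le> card X" using X(1) by (intro card_mono) (auto simp: Y_def)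
    then have "c powr (real r - shrink_potential \<delta> (card (Y e))) \<le> c powr (real r - L)"
      unfolding L_def by (rule powr_shrink_potential_mono[OF \<delta>(1) c])
    then show ?thesis using IH[of "Y e"] \<open>0 \<le> R\<close> by (auto simp: Y_def intro: order_trans mult_left_mono)
  qed
  have dense_step: "real (card (avoiding_seqs P G r (Y e))) \<le> R * c powr (real r + 1 - L)"
    if "\<not> sparse_at e" for e
  proof -
    have "real (card (Y e)) \<le> (1 - \<delta>) * real (card X)"
      using card_non_neighbours_le[OF X(1)] that by (simp add: Y_def sparse_at_def)
    moreover have "card X \<noteq> 0" using X by simp
    ultimately have "c powr (real r - shrink_potential \<delta> (card (Y e))) \<le> c powr (real r + 1 - L)"
      unfolding L_def by (intro powr_shrink_potential_shrink[OF \<delta> c])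
    then show ?thesis using IH[of "Y e"] \<open>0 \<le> R\<close> by (auto simp: Y_def intro: order_trans mult_left_mono)
  qed
  have "real (card (avoiding_seqs P G (Suc r) X)) \<le>
      (\<Sum>e\<in>{e\<in>P. snd e \<in> X}. real (card (avoiding_seqs P G r (Y e))))"
    using card_avoiding_seqs_Suc_le[OF P(1), of G r X] unfolding Y_def of_nat_sum[symmetric]
    by (rule of_nat_mono)
  also have "\<dots> \<le> (c * N) * (R * c powr (real r - L)) + N * (R * c powr (real r + 1 - L))"
  proof (rule sum_le_by_cases[where Q = sparse_at])
    show "real (card {e \<in> {e\<in>P. snd e \<in> X}. sparse_at e}) \<le> c * N"
      using sparse by (simp add: sparse_at_def conj_assoc)
    have "card {e \<in> {e\<in>P. snd e \<in> X}. \<not> sparse_at e} \<le> card P" using P(1) by (intro card_mono) auto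
    then show "real (card {e \<in> {e\<in>P. snd e \<in> X}. \<not> sparse_at e}) \<le> N" using P(2) by linarith
  qed (use P(1) sparse_step dense_step \<open>0 \<le> R\<close> in auto)
  also have "\<dots> = 2 * N * R * c powr (real (Suc r) - L)"
  proof -
    have "c powr (real r + 1 - L) = c powr 1 * c powr (real r - L)"
      by (subst powr_add[symmetric]) (simp add: algebra_simps)
    then show ?thesis using c by (simp add: algebra_simps)
  qed
  finally show ?thesis by (simp add: L_def)
qed

lemma card_avoiding_seqs_le:
  fixes \<delta> c N :: real
  assumes P: "finite P" "real (card P) \<le> N" and \<delta>: "0 < \<delta>" "\<delta> < 1" and c: "0 < c" "c \<le> 1"
    and sparse: "\<And>X. X \<subseteq> V \<Longrightarrow>
      real (card {e\<in>P. snd e \<in> X \<and> real (card {b\<in>X. G (fst e) b}) \<le> \<delta> * card X}) \<le> c * N"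
    and V: "finite V" "X \<subseteq> V"
  shows "real (card (avoiding_seqs P G r X)) \<le> 2^r * N^r * c powr (real r - shrink_potential \<delta> (card X))"
  using V(2)
proof (induction r arbitrary: X)
  case 0
  have "c powr 0 \<le> c powr (0 - shrink_potential \<delta> (card X))"
    using c shrink_potential_nonneg[OF \<delta>(1)] by (intro powr_mono') auto
  then show ?case using c by (simp add: avoiding_seqs_0)
next
  case (Suc r)
  have "0 \<le> N" using P(2) of_nat_0_le_iff order_trans by blast
  show ?case
  proof (cases "X = {}")
    case True
    then show ?thesis using card_avoiding_seqs_Suc_le[OF P(1), of G r X] \<open>0 \<le> N\<close> by simp
  next
    case False
    have "finite X" using Suc.prems V(1) finite_subset by blast
    have "real (card (avoiding_seqs P G (Suc r) X)) \<le>
        2 * N * (2^r * N^r) * c powr (real (Suc r) - shrink_potential \<delta> (card X))"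
      using Suc.IH Suc.prems \<open>0 \<le> N\<close>
      by (intro card_avoiding_seqs_Suc_bound[OF P \<delta> c sparse[OF Suc.prems] \<open>finite X\<close> False]) auto
    then show ?thesis by (simp add: algebra_simps)
  qed
qed

section \<open>Sparse edge pairs\<close>

definition edge_pairs :: "nat \<Rightarrow> (nat \<Rightarrow> nat \<Rightarrow> bool) \<Rightarrow> (nat \<times> nat) set" where
  "edge_pairs n F = {(a,b). a < n \<and> b < n \<and> F a b}"

lemma finite_edge_pairs: "finite (edge_pairs n F)"
  by (rule finite_subset[of _ "{..<n} \<times> {..<n}"]) (auto simp: edge_pairs_def)

lemma mem_edge_pairs: "e \<in> edge_pairs n F \<longleftrightarrow> fst e < n \<and> snd e < n \<and> F (fst e) (snd e)"
  by (cases e) (simp add: edge_pairs_def)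

lemma card_edge_pairs:
  assumes "\<And>v. v < n \<Longrightarrow> degree n F v = d"
  shows "card (edge_pairs n F) = d * n"
proof -
  have "edge_pairs n F = (SIGMA a:{..<n}. {b. b < n \<and> F a b})" by (auto simp: edge_pairs_def)
  then have "card (edge_pairs n F) = (\<Sum>a<n. degree n F a)" by (simp add: degree_def)
  then show ?thesis using assms by simp
qed

lemma sqrt_card_le_of_sparse:
  fixes S X :: "nat set" and lam :: real
  assumes mixing: "real d * card S * card X / real n - lam * sqrt (card S * card X)
      \<le> real (\<Sum>a\<in>S. card {b\<in>X. G a b})"
    and sparse: "\<And>a. a \<in> S \<Longrightarrow> real (card {b\<in>X. G a b}) \<le> real d / (2 * real n) * card X"
    and "0 < n" "0 < d" "0 \<le> lam"
  shows "sqrt (card S * card X) \<le> 2 * real n * lam / real d"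
proof -
  define t where "t = sqrt (card S * card X)"
  have t: "0 \<le> t" "t\<^sup>2 = card S * card X" by (simp_all add: t_def)
  have "real (\<Sum>a\<in>S. card {b\<in>X. G a b}) \<le> (\<Sum>a\<in>S. real d / (2 * real n) * card X)"
    unfolding of_nat_sum by (rule sum_mono) (rule sparse)
  also have "\<dots> = real d * t\<^sup>2 / (2 * real n)" by (simp add: t)
  finally have "real d * t\<^sup>2 / real n - lam * t \<le> real d * t\<^sup>2 / (2 * real n)"
    using mixing by (simp add: t t_def)
  then have "real d * t\<^sup>2 / (2 * real n) \<le> lam * t" using \<open>0 < n\<close> by (simp add: field_simps)
  then have "t \<le> 2 * real n * lam / real d"
    using assms(3-5) t(1) by (cases "t = 0") (simp_all add: field_simps power2_eq_square)
  then show ?thesis by (simp add: t_def)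
qed

text \<open>The \<open>G\<close>-mixing inequality bounds the set \<open>S\<close> of vertices with few \<open>G\<close>-neighbours
  in \<open>X\<close>; the \<open>F\<close>-mixing inequality then bounds the number of \<open>F\<close>-edges from \<open>S\<close> to \<open>X\<close>.\<close>

lemma card_sparse_pairs_le:
  fixes n dF dG :: nat and lF lG :: real
  assumes mixF: "\<And>S T. S \<subseteq> {..<n} \<Longrightarrow> T \<subseteq> {..<n} \<Longrightarrow>
      \<bar>real (\<Sum>i\<in>S. card {j\<in>T. F i j}) - real dF * card S * card T / n\<bar> \<le> lF * sqrt (card S * card T)"
    and mixG: "\<And>S T. S \<subseteq> {..<n} \<Longrightarrow> T \<subseteq> {..<n} \<Longrightarrow>
      \<bar>real (\<Sum>i\<in>S. card {j\<in>T. G i j}) - real dG * card S * card T / n\<bar> \<le> lG * sqrt (card S * card T)"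
    and "0 \<le> lF" "0 \<le> lG" "0 < n" "0 < dF" "0 < dG" and X: "X \<subseteq> {..<n}"
  shows "real (card {e\<in>edge_pairs n F. snd e \<in> X \<and>
      real (card {b\<in>X. G (fst e) b}) \<le> real dG / (2 * real n) * card X})
    \<le> (4 * lG\<^sup>2 / (real dG)\<^sup>2 + 2 * lF * lG / (real dF * real dG)) * (real dF * real n)"
proof -
  define S where "S = {a\<in>{..<n}. real (card {b\<in>X. G a b}) \<le> real dG / (2 * real n) * card X}"
  define t where "t = sqrt (card S * card X)"
  have S: "S \<subseteq> {..<n}" by (auto simp: S_def)
  have "finite S" "finite X" using S X finite_subset by auto
  have "{e\<in>edge_pairs n F. snd e \<in> X \<and> real (card {b\<in>X. G (fst e) b}) \<le> real dG / (2 * real n) * card X}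
      = (SIGMA a:S. {b\<in>X. F a b})"
    using X by (auto simp: S_def edge_pairs_def)
  then have "real (card {e\<in>edge_pairs n F. snd e \<in> X \<and>
      real (card {b\<in>X. G (fst e) b}) \<le> real dG / (2 * real n) * card X})
      = real (\<Sum>a\<in>S. card {b\<in>X. F a b})"
    using \<open>finite S\<close> \<open>finite X\<close> by simp
  also have "\<dots> \<le> real dF * t\<^sup>2 / n + lF * t"
    using mixF[OF S X] unfolding abs_le_iff by (simp add: t_def)
  also have "\<dots> \<le> real dF * (2 * real n * lG / real dG)\<^sup>2 / real n + lF * (2 * real n * lG / real dG)"
  proof -
    have "t \<le> 2 * real n * lG / real dG"
      unfolding t_def
    proof (rule sqrt_card_le_of_sparse)
      show "real dG * card S * card X / real n - lG * sqrt (card S * card X)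
          \<le> real (\<Sum>a\<in>S. card {b\<in>X. G a b})"
        using mixG[OF S X] unfolding abs_le_iff by linarith
    qed (use assms(4,5,7) in \<open>auto simp: S_def\<close>)
    moreover have "0 \<le> t" by (simp add: t_def)
    ultimately have "t\<^sup>2 \<le> (2 * real n * lG / real dG)\<^sup>2" "lF * t \<le> lF * (2 * real n * lG / real dG)"
      using assms(3) by (auto intro!: power_mono mult_left_mono[of t _ lF] simp del: times_divide_eq_right)
    moreover from this(1) have "real dF * t\<^sup>2 / real n \<le> real dF * (2 * real n * lG / real dG)\<^sup>2 / real n"
      by (intro divide_right_mono mult_left_mono) auto
    ultimately show ?thesis by linarith
  qed
  also have "\<dots> = (4 * lG\<^sup>2 / (real dG)\<^sup>2 + 2 * lF * lG / (real dF * real dG)) * (real dF * real n)"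
    using assms(5-7) by (simp add: power2_eq_square divide_simps) (simp add: algebra_simps)
  finally show ?thesis .
qed

text \<open>Capping the constant at 1 is harmless, as there are only \<open>dF n\<close> edge pairs, and makes
  \<open>c powr\<close> antitone in \<open>card_avoiding_seqs_le\<close>.\<close>

lemma card_sparse_edge_pairs_le_min:
  assumes "2 \<le> n" "1 \<le> dF" "1 \<le> dG" and F: "ndl_graph n dF lF F" and G: "ndl_graph n dG lG G"
    and X: "X \<subseteq> {..<n}"
  shows "real (card {e\<in>edge_pairs n F. snd e \<in> X \<and>
      real (card {b\<in>X. G (fst e) b}) \<le> real dG / (2 * real n) * card X})
    \<le> min (4 * lG\<^sup>2 / (real dG)\<^sup>2 + 2 * lF * lG / (real dF * real dG)) 1 * (real dF * real n)"
proof -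
  have "real (card {e\<in>edge_pairs n F. snd e \<in> X \<and>
      real (card {b\<in>X. G (fst e) b}) \<le> real dG / (2 * real n) * card X}) \<le> real (card (edge_pairs n F))"
    by (intro of_nat_mono card_mono finite_edge_pairs) auto
  also have "\<dots> = real dF * real n" using F by (simp add: card_edge_pairs ndl_graph_def)
  finally show ?thesis
    using card_sparse_pairs_le[OF expander_mixing[OF F \<open>2 \<le> n\<close>] expander_mixing[OF G \<open>2 \<le> n\<close>]
        ndl_graph_spectrum(1)[OF F \<open>2 \<le> n\<close>] ndl_graph_spectrum(1)[OF G \<open>2 \<le> n\<close>] _ _ _ X] assms(1-3)
    by simp
qed

section \<open>The digraph on the edges of F\<close>

lemma Hs_free_disjoint:
  assumes "Hs_free n s F G" "graph_on n F" "F a b"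
  shows "\<not> G a b"
proof
  assume "G a b"
  moreover have "a < n" "b < n" using assms(2,3) unfolding graph_on_def by auto
  ultimately have "\<exists>a' b' :: nat \<Rightarrow> nat. (\<forall>i<s. a' i < n \<and> b' i < n) \<and> (\<forall>i<s. F (a' i) (b' i)) \<and>
      (\<forall>i j. i < j \<and> j < s \<longrightarrow> G (a' i) (b' j))"
    using assms(3) by (intro exI[of _ "\<lambda>_. a"] exI[of _ "\<lambda>_. b"]) auto
  then show False using assms(1) unfolding Hs_free_def by blast
qed

definition edge_digraph :: "nat \<Rightarrow> (nat \<Rightarrow> nat \<times> nat) \<Rightarrow> (nat \<Rightarrow> nat \<Rightarrow> bool) \<Rightarrow> nat \<Rightarrow> nat \<Rightarrow> bool" where
  "edge_digraph N \<phi> G u v \<longleftrightarrow> u < N \<and> v < N \<and> G (fst (\<phi> u)) (snd (\<phi> v))"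

lemma digraph_on_edge_digraph:
  assumes "\<And>u. u < N \<Longrightarrow> \<phi> u \<in> edge_pairs n F" and "\<And>a b. F a b \<Longrightarrow> \<not> G a b"
  shows "digraph_on N (edge_digraph N \<phi> G)"
  unfolding digraph_on_def edge_digraph_def using assms by (auto simp: mem_edge_pairs)

lemma Ts_free_edge_digraph:
  assumes Hs: "Hs_free n s F G" and \<phi>: "\<And>u. u < N \<Longrightarrow> \<phi> u \<in> edge_pairs n F"
  shows "Ts_free N s (edge_digraph N \<phi> G)"
  unfolding Ts_free_def
proof
  assume "\<exists>f. inj_on f {0..<s} \<and> (\<forall>i<s. f i < N) \<and> (\<forall>i j. i < j \<and> j < s \<longrightarrow> edge_digraph N \<phi> G (f i) (f j))"
  then obtain f where f: "\<And>i. i < s \<Longrightarrow> f i < N"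
    "\<And>i j. i < j \<Longrightarrow> j < s \<Longrightarrow> G (fst (\<phi> (f i))) (snd (\<phi> (f j)))"
    unfolding edge_digraph_def by blast
  have "\<phi> (f i) \<in> edge_pairs n F" if "i < s" for i using \<phi> f(1) that by blast
  then have "\<exists>a b :: nat \<Rightarrow> nat. (\<forall>i<s. a i < n \<and> b i < n) \<and> (\<forall>i<s. F (a i) (b i)) \<and>
      (\<forall>i j. i < j \<and> j < s \<longrightarrow> G (a i) (b j))"
    using f(2) by (intro exI[of _ "\<lambda>i. fst (\<phi> (f i))"] exI[of _ "\<lambda>i. snd (\<phi> (f i))"])
      (simp add: mem_edge_pairs)
  then show False using Hs unfolding Hs_free_def by blast
qed

lemma fwi_edge_digraph_le:
  assumes inj: "inj_on \<phi> {0..<N}" and \<phi>: "\<And>u. u < N \<Longrightarrow> \<phi> u \<in> edge_pairs n F"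
  shows "fwi N (edge_digraph N \<phi> G) k \<le> card (avoiding_seqs (edge_pairs n F) G k {..<n})"
  unfolding fwi_def
proof (rule card_inj_on_le)
  let ?I = "{xs. length xs = k \<and> set xs \<subseteq> {0..<N} \<and>
    (\<forall>i j. i < j \<and> j < k \<longrightarrow> \<not> edge_digraph N \<phi> G (xs ! i) (xs ! j))}"
  show "inj_on (map \<phi>) ?I"
  proof (rule inj_onI)
    fix xs ys assume "xs \<in> ?I" "ys \<in> ?I" and map_eq: "map \<phi> xs = map \<phi> ys"
    then have "inj_on \<phi> (set xs \<union> set ys)" by (intro inj_on_subset[OF inj]) auto
    with map_eq show "xs = ys" by (rule map_inj_on)
  qed
  show "map \<phi> ` ?I \<subseteq> avoiding_seqs (edge_pairs n F) G k {..<n}"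
  proof
    fix ps assume "ps \<in> map \<phi> ` ?I"
    then obtain xs where ps: "ps = map \<phi> xs" and xs: "xs \<in> ?I" by blast
    then have N: "xs ! j < N" if "j < k" for j using that by (auto simp: set_conv_nth)
    have "forward_avoiding G {..<n} ps"
    proof (rule forward_avoidingI)
      show "snd (ps ! j) \<in> {..<n}" if "j < length ps" for j
        using \<phi>[OF N, of j] that xs by (simp add: ps mem_edge_pairs)
      show "\<not> G (fst (ps ! i)) (snd (ps ! j))" if "i < j" "j < length ps" for i j
      proof -
        have "j < k" using that xs by (simp add: ps)
        then have "\<not> edge_digraph N \<phi> G (xs ! i) (xs ! j)" using xs that(1) by blast
        then show ?thesis using N[of i] N[of j] \<open>j < k\<close> that(1) xs by (simp add: ps edge_digraph_def)
      qed
    qed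
    moreover have "set ps \<subseteq> edge_pairs n F" using xs \<phi> by (auto simp: ps)
    ultimately show "ps \<in> avoiding_seqs (edge_pairs n F) G k {..<n}"
      using xs by (simp add: avoiding_seqs_def ps)
  qed
  show "finite (avoiding_seqs (edge_pairs n F) G k {..<n})"
    by (rule finite_avoiding_seqs[OF finite_edge_pairs])
qed

section \<open>Counting forward independent tuples\<close>

lemma two_pow_mult_powr_le:
  fixes c \<eta> L w N :: real
  assumes c: "0 < c" "c \<le> 1" "c \<le> 6 * \<eta>" and w: "L \<le> w" "0 \<le> w" "w \<le> real k" and "0 \<le> N"
  shows "2^k * N^k * c powr (real k - L) \<le> 16^k * \<eta> powr (real k - w) * N^k"
proof -
  have twelve: "(2::real)^k * 6^k = 12^k" by (simp flip: power_mult_distrib)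
  have "c powr (real k - L) \<le> c powr (real k - w)" using c w by (intro powr_mono') auto
  also have "\<dots> \<le> (6 * \<eta>) powr (real k - w)" using c w by (intro powr_mono2) auto
  also have "\<dots> = 6 powr (real k - w) * \<eta> powr (real k - w)" using c by (simp add: powr_mult)
  also have "\<dots> \<le> 6 ^ k * \<eta> powr (real k - w)"
    using w powr_mono[of "real k - w" "real k" 6] by (intro mult_right_mono) (auto simp: powr_realpow)
  finally have "2^k * N^k * c powr (real k - L) \<le> 2^k * N^k * (6 ^ k * \<eta> powr (real k - w))"
    using \<open>0 \<le> N\<close> by (intro mult_left_mono) auto
  also have "\<dots> = 12^k * \<eta> powr (real k - w) * N^k"
    unfolding twelve[symmetric] by (simp only: ac_simps)
  also have "\<dots> \<le> 16^k * \<eta> powr (real k - w) * N^k"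
    using \<open>0 \<le> N\<close> by (intro mult_right_mono power_mono) auto
  finally show ?thesis .
qed

lemma card_avoiding_edge_seqs_le:
  fixes n dF dG k :: nat and lF lG :: real
  assumes n: "3 \<le> n" and dF: "1 \<le> dF" and dG: "1 \<le> dG"
    and F: "ndl_graph n dF lF F" and G: "ndl_graph n dG lG G"
    and disjoint: "\<And>a b. F a b \<Longrightarrow> \<not> G a b"
    and k: "4 * real n * ln (real n) / real dG \<le> real k"
  shows "real (card (avoiding_seqs (edge_pairs n F) G k {..<n})) \<le>
    16 ^ k * rpow (max (lG\<^sup>2 / (real dG)\<^sup>2) (lF * lG / (real dF * real dG)))
      (real k - 4 * real n * ln (real n) / real dG) * real (dF * n) ^ k"
proof -
  define \<eta> where "\<eta> = max (lG\<^sup>2 / (real dG)\<^sup>2) (lF * lG / (real dF * real dG))"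
  define w where "w = 4 * real n * ln (real n) / real dG"
  define c where "c = 4 * lG\<^sup>2 / (real dG)\<^sup>2 + 2 * lF * lG / (real dF * real dG)"
  define N where "N = real dF * real n"
  have "2 \<le> n" "0 < n" using n by simp_all
  have "0 \<le> lF" using ndl_graph_spectrum(1)[OF F \<open>2 \<le> n\<close>] .
  have "0 < lG" by (rule ndl_graph_lambda_pos_of_disjoint[OF F G \<open>2 \<le> n\<close> dF dG disjoint])
  then have "0 < \<eta>" using dG by (simp add: \<eta>_def less_max_iff_disj)
  have "0 < c" using \<open>0 < lG\<close> \<open>0 \<le> lF\<close> dF dG by (simp add: c_def add_pos_nonneg)
  have "c \<le> 6 * \<eta>" unfolding c_def \<eta>_def by (simp add: max_def)
  have "dG \<le> n"
    using G card_mono[of "{..<n}" "{u. u < n \<and> G 0 u}"] \<open>0 < n\<close> by (auto simp: ndl_graph_def degree_def)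
  have "real (card (avoiding_seqs (edge_pairs n F) G k {..<n})) \<le>
      2^k * N^k * min c 1 powr (real k - shrink_potential (real dG / (2 * real n)) (card {..<n}))"
    using card_sparse_edge_pairs_le_min[OF \<open>2 \<le> n\<close> dF dG F G] \<open>0 < c\<close> \<open>dG \<le> n\<close> \<open>0 < n\<close> dG F
    by (intro card_avoiding_seqs_le[OF finite_edge_pairs]) (auto simp: card_edge_pairs ndl_graph_def N_def c_def)
  also have "\<dots> \<le> 16^k * \<eta> powr (real k - w) * N^k"
    using shrink_potential_le[OF n dG \<open>dG \<le> n\<close>] \<open>0 < c\<close> \<open>c \<le> 6 * \<eta>\<close> k \<open>0 < n\<close> n dG
    by (intro two_pow_mult_powr_le) (auto simp: w_def N_def)
  also have "\<eta> powr (real k - w) = rpow \<eta> (real k - w)" using \<open>0 < \<eta>\<close> by (simp add: rpow_def)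
  finally show ?thesis by (simp add: \<eta>_def w_def N_def)
qed

theorem lemma2p8:
  fixes s n dF dG :: nat and lF lG :: real and F G :: "nat \<Rightarrow> nat \<Rightarrow> bool"
  assumes "s \<ge> 3" and "n \<ge> 3"
    and "dF \<ge> 1" and "dG \<ge> 1"
    and "ndl_graph n dF lF F" and "ndl_graph n dG lG G"
    and "Hs_free n s F G"
  shows "\<exists>A. digraph_on (dF * n) A \<and> Ts_free (dF * n) s A \<and>
    (\<forall>k::nat. real k \<ge> 4 * real n * ln (real n) / real dG \<longrightarrow>
       real (fwi (dF * n) A k) \<le>
         16 ^ k * rpow (max (lG\<^sup>2 / (real dG)\<^sup>2) (lF * lG / (real dF * real dG)))
                       (real k - 4 * real n * ln (real n) / real dG)
           * (real (dF * n)) ^ k)"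
proof -
  have regular: "\<And>v. v < n \<Longrightarrow> degree n F v = dF" and "graph_on n F"
    using assms(5) unfolding ndl_graph_def by auto
  have disjoint: "\<And>a b. F a b \<Longrightarrow> \<not> G a b"
    by (rule Hs_free_disjoint[OF assms(7) \<open>graph_on n F\<close>])
  have "card {0..<dF * n} = card (edge_pairs n F)" by (simp add: card_edge_pairs[OF regular])
  then obtain \<phi> where "bij_betw \<phi> {0..<dF * n} (edge_pairs n F)"
    using finite_same_card_bij[OF finite_atLeastLessThan finite_edge_pairs] by blast
  then have inj: "inj_on \<phi> {0..<dF * n}" and into: "\<And>u. u < dF * n \<Longrightarrow> \<phi> u \<in> edge_pairs n F"
    by (auto simp: bij_betw_def)
  let ?D = "edge_digraph (dF * n) \<phi> G"
  show ?thesis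
  proof (intro exI[of _ ?D] conjI allI impI)
    show "digraph_on (dF * n) ?D" by (rule digraph_on_edge_digraph[OF into disjoint])
    show "Ts_free (dF * n) s ?D" by (rule Ts_free_edge_digraph[OF assms(7) into])
  qed (rule order_trans[OF of_nat_mono[OF fwi_edge_digraph_le[OF inj into]]
        card_avoiding_edge_seqs_le[OF assms(2-6) disjoint]])
qed

end
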